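(* Let $F \in \mathbb{C}^{n \times n}$ be a unitary matrix with $|F_{ij}|^2 \leq \frac{c}{n}$ for all $i,j$ (for some constant $c > 0$), let $I\in\mathbb{C}^{n\times n}$ be the identity, and let $A = [F \enspace I] \in \mathbb{C}^{n \times 2n}$. Let $1\le k,t\le n$ be integers. Then $$\left(1-\sqrt{\frac{ckt}{n}}\right) \| x \|^2_2 \leq \|Ax\|^2_2 \leq \left(1+\sqrt{\frac{ckt}{n}}\right) \| x \|^2_2$$ for all $x \in M_{k,t}$.
   Context: $M_{k,t}$ is the set of $(k,t)$-sparse vectors in $\mathbb{C}^{2n}$, i.e. vectors $x = [x_1 \enspace x_2]^T$ with $x_1, x_2 \in \mathbb{C}^n$, $x_1$ having at most $k$ nonzero entries and $x_2$ having at most $t$ nonzero entries. *)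

theory Defs
  imports "HOL-Analysis.Analysis"
begin

definition conj_transpose :: "complex^'n^'m \<Rightarrow> complex^'m^'n" where
  "conj_transpose A = (\<chi> i j. cnj (A $ j $ i))"

definition unitary_mat :: "complex^'n^'n \<Rightarrow> bool" where
  "unitary_mat F \<longleftrightarrow> F ** conj_transpose F = mat 1 \<and> conj_transpose F ** F = mat 1"

text \<open>A vector of C^{2n} is represented as a pair (x1, x2) of vectors in C^n
  (the stacked vector [x1; x2]).  Its squared Euclidean norm is
  norm x1 ^ 2 + norm x2 ^ 2.\<close>
definition sq_norm2 :: "(complex^'n) \<times> (complex^'n) \<Rightarrow> real" where
  "sq_norm2 x = (norm (fst x))\<^sup>2 + (norm (snd x))\<^sup>2"

definition nnz :: "complex^'n \<Rightarrow> nat" where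
  "nnz v = card {i. v $ i \<noteq> 0}"

definition sparse_kt :: "nat \<Rightarrow> nat \<Rightarrow> ((complex^'n) \<times> (complex^'n)) set" where
  "sparse_kt k t = {x. nnz (fst x) \<le> k \<and> nnz (snd x) \<le> t}"

text \<open>Action of the n x 2n matrix A = [F I] on the stacked vector [x1; x2].\<close>
definition concat_apply :: "complex^'n^'n \<Rightarrow> complex^'n^'n \<Rightarrow> (complex^'n) \<times> (complex^'n) \<Rightarrow> complex^'n" where
  "concat_apply F G x = F *v fst x + G *v snd x"

end

theory Submission
  imports Defs
begin

text \<open>Write \<open>x = (x\<^sub>1, x\<^sub>2)\<close>. Since \<open>F\<close> is unitary,
  \<open>\<parallel>F x\<^sub>1 + x\<^sub>2\<parallel>\<^sup>2 = \<parallel>x\<^sub>1\<parallel>\<^sup>2 + \<parallel>x\<^sub>2\<parallel>\<^sup>2 + 2 Re \<langle>F x\<^sub>1, x\<^sub>2\<rangle>\<close>, so everything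
  rests on bounding the cross term. The entry bound gives
  \<open>|\<langle>F x\<^sub>1, x\<^sub>2\<rangle>| \<le> \<surd>(c/n) \<parallel>x\<^sub>1\<parallel>\<^sub>1 \<parallel>x\<^sub>2\<parallel>\<^sub>1\<close>, and by Cauchy-Schwarz on the
  supports the \<open>\<ell>\<^sub>1\<close>-norms are at most \<open>\<surd>k \<parallel>x\<^sub>1\<parallel>\<close> and \<open>\<surd>t \<parallel>x\<^sub>2\<parallel>\<close>.
  Finally \<open>2 \<parallel>x\<^sub>1\<parallel> \<parallel>x\<^sub>2\<parallel> \<le> \<parallel>x\<^sub>1\<parallel>\<^sup>2 + \<parallel>x\<^sub>2\<parallel>\<^sup>2\<close>.\<close>

lemma power2_norm_vec: "(norm (v :: 'a::real_normed_vector^'n))\<^sup>2 = (\<Sum>i\<in>UNIV. (norm (v$i))\<^sup>2)"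
  unfolding norm_vec_def L2_set_def by (simp add: sum_nonneg)

lemma of_real_power2_norm_vec:
  "complex_of_real ((norm (v :: complex^'n))\<^sup>2) = (\<Sum>i\<in>UNIV. v$i * cnj (v$i))"
  unfolding power2_norm_vec by (simp only: of_real_sum complex_norm_square)

lemma matrix_vector_mult_adjoint:
  fixes F :: "complex^'n^'m"
  shows "(\<Sum>i\<in>UNIV. (F *v x)$i * cnj (y$i))
       = (\<Sum>j\<in>UNIV. x$j * cnj ((conj_transpose F *v y)$j))"
proof -
  have "(\<Sum>i\<in>UNIV. (F *v x)$i * cnj (y$i))
      = (\<Sum>i\<in>UNIV. \<Sum>j\<in>UNIV. x$j * (F$i$j * cnj (y$i)))"
    by (simp add: matrix_vector_mult_def sum_distrib_left sum_distrib_right mult_ac)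
  also have "\<dots> = (\<Sum>j\<in>UNIV. x$j * (\<Sum>i\<in>UNIV. F$i$j * cnj (y$i)))"
    by (subst sum.swap) (simp add: sum_distrib_left)
  finally show ?thesis
    by (simp add: matrix_vector_mult_def conj_transpose_def)
qed

lemma norm_matrix_vector_mult_isometry:
  fixes F :: "complex^'n^'m"
  assumes "conj_transpose F ** F = mat 1"
  shows "norm (F *v x) = norm x"
proof -
  have "complex_of_real ((norm (F *v x))\<^sup>2)
      = (\<Sum>j\<in>UNIV. x$j * cnj ((conj_transpose F *v (F *v x))$j))"
    by (simp only: of_real_power2_norm_vec matrix_vector_mult_adjoint)
  also have "\<dots> = complex_of_real ((norm x)\<^sup>2)"
    by (simp only: matrix_vector_mul_assoc assms matrix_vector_mul_lid of_real_power2_norm_vec)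
  finally show ?thesis
    by (simp only: of_real_eq_iff power2_eq_iff_nonneg norm_ge_zero)
qed

lemma sum_cmod_le_sqrt_nnz_mult_norm:
  fixes v :: "complex^'n"
  assumes "nnz v \<le> k"
  shows "(\<Sum>i\<in>UNIV. cmod (v$i)) \<le> sqrt (real k) * norm v"
proof -
  define S where "S = {i. v$i \<noteq> 0}"
  have "(\<Sum>i\<in>UNIV. cmod (v$i))\<^sup>2 = (\<Sum>i\<in>S. cmod (v$i))\<^sup>2"
    by (intro arg_cong[where f = "\<lambda>y. y\<^sup>2"] sum.mono_neutral_cong_right) (auto simp: S_def)
  also have "\<dots> \<le> (\<Sum>i\<in>S. (cmod (v$i))\<^sup>2) * card S"
    by (rule sum_squared_le_sum_of_squares)
  also have "(\<Sum>i\<in>S. (cmod (v$i))\<^sup>2) = (norm v)\<^sup>2"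
    unfolding power2_norm_vec by (rule sum.mono_neutral_cong_left) (auto simp: S_def)
  also have "(norm v)\<^sup>2 * card S \<le> (norm v)\<^sup>2 * k"
    using assms by (intro mult_left_mono) (simp_all add: nnz_def S_def)
  also have "\<dots> = (sqrt (real k) * norm v)\<^sup>2"
    by (simp add: power_mult_distrib)
  finally show ?thesis
    by (rule power2_le_imp_le) simp
qed

lemma inner_matrix_vector_mult_le:
  fixes F :: "complex^'n^'m"
  assumes "\<And>i j. cmod (F$i$j) \<le> M"
  shows "\<bar>inner (F *v u) v\<bar> \<le> M * (\<Sum>j\<in>UNIV. cmod (u$j)) * (\<Sum>i\<in>UNIV. cmod (v$i))"
proof -
  have row: "cmod ((F *v u)$i) \<le> M * (\<Sum>j\<in>UNIV. cmod (u$j))" for i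
  proof -
    have "cmod ((F *v u)$i) \<le> (\<Sum>j\<in>UNIV. cmod (F$i$j) * cmod (u$j))"
      by (simp add: matrix_vector_mult_def norm_mult order_trans[OF norm_sum])
    also have "\<dots> \<le> (\<Sum>j\<in>UNIV. M * cmod (u$j))"
      by (intro sum_mono mult_right_mono assms) simp
    finally show ?thesis
      by (simp add: sum_distrib_left)
  qed
  have "\<bar>inner (F *v u) v\<bar> \<le> (\<Sum>i\<in>UNIV. \<bar>inner ((F *v u)$i) (v$i)\<bar>)"
    unfolding inner_vec_def by (rule sum_abs)
  also have "\<dots> \<le> (\<Sum>i\<in>UNIV. M * (\<Sum>j\<in>UNIV. cmod (u$j)) * cmod (v$i))"
    by (intro sum_mono order_trans[OF Cauchy_Schwarz_ineq2] mult_right_mono row) simp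
  finally show ?thesis
    by (simp add: sum_distrib_left)
qed

lemma norm_add_power2_bounds:
  fixes u w :: "'a::real_inner"
  assumes "\<bar>inner u w\<bar> \<le> r * norm u * norm w" and "0 \<le> r"
  shows "(1 - r) * ((norm u)\<^sup>2 + (norm w)\<^sup>2) \<le> (norm (u + w))\<^sup>2
       \<and> (norm (u + w))\<^sup>2 \<le> (1 + r) * ((norm u)\<^sup>2 + (norm w)\<^sup>2)"
proof -
  have "2 * (norm u * norm w) \<le> (norm u)\<^sup>2 + (norm w)\<^sup>2"
    using sum_squares_bound[of "norm u" "norm w"] by (simp add: mult_ac)
  then have "2 * \<bar>inner u w\<bar> \<le> r * ((norm u)\<^sup>2 + (norm w)\<^sup>2)"
    using assms mult_left_mono[of _ _ r] by (fastforce simp: mult_ac)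
  moreover have "(norm (u + w))\<^sup>2 = (norm u)\<^sup>2 + (norm w)\<^sup>2 + 2 * inner u w"
    using dot_norm[of u w] by simp
  ultimately show ?thesis
    by (auto simp: algebra_simps abs_le_iff)
qed

theorem theorem5:
  fixes F :: "complex^'n^'n" and c :: real and k t :: nat
    and x :: "(complex^'n) \<times> (complex^'n)"
  assumes "unitary_mat F"
    and "c > 0"
    and "\<And>i j. (cmod (F $ i $ j))\<^sup>2 \<le> c / real CARD('n)"
    and "1 \<le> k" and "k \<le> CARD('n)" and "1 \<le> t" and "t \<le> CARD('n)"
    and "x \<in> sparse_kt k t"
  shows "(1 - sqrt (c * real k * real t / real CARD('n))) * sq_norm2 x
           \<le> (norm (concat_apply F (mat 1) x))\<^sup>2
       \<and> (norm (concat_apply F (mat 1) x))\<^sup>2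
           \<le> (1 + sqrt (c * real k * real t / real CARD('n))) * sq_norm2 x"
proof -
  let ?r = "sqrt (c * real k * real t / real CARD('n))"
  obtain x1 x2 where x: "x = (x1, x2)" by (cases x)
  define s where "s = sqrt (c / real CARD('n))"
  have isometry: "norm (F *v x1) = norm x1"
    using assms(1) by (simp add: unitary_mat_def norm_matrix_vector_mult_isometry)
  have "cmod (F$i$j) \<le> s" for i j
    unfolding s_def using assms(3) by (simp add: real_le_rsqrt)
  then have "\<bar>inner (F *v x1) x2\<bar> \<le> s * (\<Sum>j\<in>UNIV. cmod (x1$j)) * (\<Sum>i\<in>UNIV. cmod (x2$i))"
    by (rule inner_matrix_vector_mult_le)
  also have "\<dots> \<le> s * (sqrt (real k) * norm x1) * (sqrt (real t) * norm x2)"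
    using assms(8) \<open>c > 0\<close>
    by (intro mult_mono sum_cmod_le_sqrt_nnz_mult_norm)
       (auto simp: sparse_kt_def x s_def sum_nonneg)
  also have "\<dots> = ?r * norm (F *v x1) * norm x2"
    by (simp add: s_def isometry real_sqrt_mult[symmetric] mult_ac)
  finally have "\<bar>inner (F *v x1) x2\<bar> \<le> \<dots>" .
  then have "(1 - ?r) * ((norm (F *v x1))\<^sup>2 + (norm x2)\<^sup>2) \<le> (norm (F *v x1 + x2))\<^sup>2
      \<and> (norm (F *v x1 + x2))\<^sup>2 \<le> (1 + ?r) * ((norm (F *v x1))\<^sup>2 + (norm x2)\<^sup>2)"
    by (rule norm_add_power2_bounds) (simp add: \<open>c > 0\<close> less_imp_le)
  moreover have "concat_apply F (mat 1) x = F *v x1 + x2"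
    by (simp add: x concat_apply_def)
  moreover have "sq_norm2 x = (norm (F *v x1))\<^sup>2 + (norm x2)\<^sup>2"
    by (simp add: x sq_norm2_def isometry)
  ultimately show ?thesis
    by (simp only:)
qed

end
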